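(* Let $X_1,\dots,X_r$ be Banach spaces and let $\|\cdot\|_\psi$ be an absolute normalized norm on $\mathbb{R}^r$. Let $T:K\to K$ be a nonexpansive mapping on a weakly compact convex subset $K$ of $(X_1\oplus\dots\oplus X_r)_\psi$ which is minimal invariant for $T$, with $\operatorname{diam}K=1$, and let $(w_n)=((x_n^{(1)},\dots,x_n^{(r)}))$ be an approximate fixed point sequence for $T$ in $K$ converging weakly to $(0,\dots,0)\in K$ with $\lim_{n\to\infty}\|x_n^{(r)}\|=0$. Let $\varepsilon_1\in(0,1)$, let $k\ge 1$ be an integer, and let $w_{n_1}=(x_{n_1}^{(1)},\dots,x_{n_1}^{(r)})$ be a term of the sequence with $\|Tw_{n_1}-w_{n_1}\|_\psi<\varepsilon_1$ and $\|x_{n_1}^{(r)}\|<\varepsilon_1$. Define $D_1^1=\{w_{n_1}\}$ and $D_{j+1}^1=\operatorname{conv}(D_j^1\cup T(D_j^1))$ for $j=1,\dots,k-1$. Then for every $u=(y^{(1)},\dots,y^{(r)})\in D_k^1$ we have $\|y^{(r)}\|<k\varepsilon_1$.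
   Context: A norm $\|\cdot\|$ on $\mathbb{R}^r$ is absolute if $\|(x_1,\dots,x_r)\|=\|(|x_1|,\dots,|x_r|)\|$ for all $x$, and normalized if $\|e_1\|=\dots=\|e_r\|=1$ for the standard unit vectors. For Banach spaces $X_1,\dots,X_r$, the direct sum $(X_1\oplus\dots\oplus X_r)_\psi$ is $X_1\times\dots\times X_r$ with the norm $\|(x_1,\dots,x_r)\|_\psi=\|(\|x_1\|,\dots,\|x_r\|)\|_\psi$. A mapping $T$ is nonexpansive if $\|Tx-Ty\|\le\|x-y\|$. $K$ is minimal invariant for $T$ if $T(K)\subset K$ and no proper nonempty weakly compact convex subset of $K$ is $T$-invariant. A sequence $(w_n)$ in $K$ is an approximate fixed point sequence if $\|Tw_n-w_n\|\to 0$. $\operatorname{conv}$ denotes the convex hull. *)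

theory Defs
  imports "HOL-Analysis.Analysis"
begin

text \<open>Vectors of R^r are modelled as functions nat => real supported on {1..r}.\<close>

definition Rvec :: "nat \<Rightarrow> (nat \<Rightarrow> real) set" where
  "Rvec r = {a. \<forall>i. i \<notin> {1..r} \<longrightarrow> a i = 0}"

definition is_norm_Rr :: "nat \<Rightarrow> ((nat \<Rightarrow> real) \<Rightarrow> real) \<Rightarrow> bool" where
  "is_norm_Rr r psi \<longleftrightarrow>
     (\<forall>a\<in>Rvec r. psi a \<ge> 0 \<and> (psi a = 0 \<longleftrightarrow> a = (\<lambda>i. 0))) \<and>
     (\<forall>a\<in>Rvec r. \<forall>c. psi (\<lambda>i. c * a i) = \<bar>c\<bar> * psi a) \<and>
     (\<forall>a\<in>Rvec r. \<forall>b\<in>Rvec r. psi (\<lambda>i. a i + b i) \<le> psi a + psi b)"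

definition absolute_normalized_norm :: "nat \<Rightarrow> ((nat \<Rightarrow> real) \<Rightarrow> real) \<Rightarrow> bool" where
  "absolute_normalized_norm r psi \<longleftrightarrow>
     is_norm_Rr r psi \<and>
     (\<forall>a\<in>Rvec r. psi a = psi (\<lambda>i. \<bar>a i\<bar>)) \<and>
     (\<forall>j\<in>{1..r}. psi (\<lambda>i. if i = j then 1 else 0) = 1)"

text \<open>The Banach spaces X_1..X_r are closed linear subspaces X i of a common Banach space 'a
  (every finite family of Banach spaces embeds isometrically in a common one).\<close>

definition psum_space :: "nat \<Rightarrow> (nat \<Rightarrow> 'a::real_normed_vector set) \<Rightarrow> (nat \<Rightarrow> 'a) set" where
  "psum_space r X = {w. (\<forall>i\<in>{1..r}. w i \<in> X i) \<and> (\<forall>i. i \<notin> {1..r} \<longrightarrow> w i = 0)}"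

definition psum_norm :: "((nat \<Rightarrow> real) \<Rightarrow> real) \<Rightarrow> (nat \<Rightarrow> 'a::real_normed_vector) \<Rightarrow> real" where
  "psum_norm psi w = psi (\<lambda>i. norm (w i))"

definition psum_dist :: "((nat \<Rightarrow> real) \<Rightarrow> real) \<Rightarrow> (nat \<Rightarrow> 'a::real_normed_vector) \<Rightarrow> (nat \<Rightarrow> 'a) \<Rightarrow> real" where
  "psum_dist psi v w = psum_norm psi (\<lambda>i. v i - w i)"

definition psum_dual :: "nat \<Rightarrow> (nat \<Rightarrow> 'a::real_normed_vector set) \<Rightarrow> ((nat \<Rightarrow> real) \<Rightarrow> real)
      \<Rightarrow> ((nat \<Rightarrow> 'a) \<Rightarrow> real) set" where
  "psum_dual r X psi = {f.
     (\<forall>v\<in>psum_space r X. \<forall>w\<in>psum_space r X. \<forall>a b.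
         f (\<lambda>i. a *\<^sub>R v i + b *\<^sub>R w i) = a * f v + b * f w) \<and>
     (\<exists>C. \<forall>w\<in>psum_space r X. \<bar>f w\<bar> \<le> C * psum_norm psi w)}"

definition psum_weak_topology :: "nat \<Rightarrow> (nat \<Rightarrow> 'a::real_normed_vector set) \<Rightarrow> ((nat \<Rightarrow> real) \<Rightarrow> real)
      \<Rightarrow> (nat \<Rightarrow> 'a) topology" where
  "psum_weak_topology r X psi = topology_generated_by
     {{w\<in>psum_space r X. f w \<in> U} | f U. f \<in> psum_dual r X psi \<and> open U}"

definition psum_convex :: "(nat \<Rightarrow> 'a::real_vector) set \<Rightarrow> bool" where
  "psum_convex C \<longleftrightarrow> (\<forall>x\<in>C. \<forall>y\<in>C. \<forall>t::real. 0 \<le> t \<and> t \<le> 1 \<longrightarrow>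
       (\<lambda>i. (1 - t) *\<^sub>R x i + t *\<^sub>R y i) \<in> C)"

definition psum_conv :: "(nat \<Rightarrow> 'a::real_vector) set \<Rightarrow> (nat \<Rightarrow> 'a) set" where
  "psum_conv A = \<Inter>{C. A \<subseteq> C \<and> psum_convex C}"

definition psum_diam :: "((nat \<Rightarrow> real) \<Rightarrow> real) \<Rightarrow> (nat \<Rightarrow> 'a::real_normed_vector) set \<Rightarrow> real" where
  "psum_diam psi K = Sup {psum_dist psi x y | x y. x \<in> K \<and> y \<in> K}"

definition psum_nonexpansive :: "((nat \<Rightarrow> real) \<Rightarrow> real) \<Rightarrow> (nat \<Rightarrow> 'a::real_normed_vector) set
      \<Rightarrow> ((nat \<Rightarrow> 'a) \<Rightarrow> (nat \<Rightarrow> 'a)) \<Rightarrow> bool" where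
  "psum_nonexpansive psi K T \<longleftrightarrow>
     (\<forall>x\<in>K. \<forall>y\<in>K. psum_dist psi (T x) (T y) \<le> psum_dist psi x y)"

definition psum_weakly_compact :: "nat \<Rightarrow> (nat \<Rightarrow> 'a::real_normed_vector set) \<Rightarrow> ((nat \<Rightarrow> real) \<Rightarrow> real)
      \<Rightarrow> (nat \<Rightarrow> 'a) set \<Rightarrow> bool" where
  "psum_weakly_compact r X psi K \<longleftrightarrow> compactin (psum_weak_topology r X psi) K"

definition minimal_invariant :: "nat \<Rightarrow> (nat \<Rightarrow> 'a::real_normed_vector set) \<Rightarrow> ((nat \<Rightarrow> real) \<Rightarrow> real)
      \<Rightarrow> ((nat \<Rightarrow> 'a) \<Rightarrow> (nat \<Rightarrow> 'a)) \<Rightarrow> (nat \<Rightarrow> 'a) set \<Rightarrow> bool" where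
  "minimal_invariant r X psi T K \<longleftrightarrow> T ` K \<subseteq> K \<and>
     (\<forall>K'. K' \<subseteq> K \<and> K' \<noteq> {} \<and> psum_weakly_compact r X psi K' \<and> psum_convex K' \<and> T ` K' \<subseteq> K'
        \<longrightarrow> K' = K)"

end

theory Submission imports Defs begin

text \<open>Let \<open>c = w n1\<close> and \<open>\<delta> = \<parallel>T c - c\<parallel> < \<epsilon>1\<close>. By induction, \<open>D j\<close> lies in the ball of radius
  \<open>(j - 1) \<delta>\<close> about \<open>c\<close> intersected with \<open>K\<close>: this set is convex, and nonexpansiveness gives
  \<open>\<parallel>T v - c\<parallel> \<le> \<parallel>T v - T c\<parallel> + \<parallel>T c - c\<parallel> \<le> \<parallel>v - c\<parallel> + \<delta>\<close>, so passing from \<open>D j\<close> to the convex hull of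
  \<open>D j \<union> T(D j)\<close> enlarges the radius by at most \<open>\<delta>\<close>. An absolute normalized norm dominates
  every coordinate, hence the \<open>r\<close>-th coordinate of \<open>u \<in> D k\<close> has norm at most
  \<open>\<parallel>c r\<parallel> + (k - 1) \<delta> < k \<epsilon>1\<close>.\<close>

context
  fixes r :: nat and psi :: "(nat \<Rightarrow> real) \<Rightarrow> real"
  assumes psi: "absolute_normalized_norm r psi"
begin

lemma psi_is_norm: "is_norm_Rr r psi"
  using psi by (simp only: absolute_normalized_norm_def)

lemma psi_nonneg: "a \<in> Rvec r \<Longrightarrow> 0 \<le> psi a"
  using psi_is_norm unfolding is_norm_Rr_def by blast

lemma psi_zero: "psi (\<lambda>i. 0) = 0"
  using psi_is_norm by (simp add: is_norm_Rr_def Rvec_def)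

lemma psi_scale: "a \<in> Rvec r \<Longrightarrow> psi (\<lambda>i. c * a i) = \<bar>c\<bar> * psi a"
  using psi_is_norm unfolding is_norm_Rr_def by blast

lemma psi_triangle: "a \<in> Rvec r \<Longrightarrow> b \<in> Rvec r \<Longrightarrow> psi (\<lambda>i. a i + b i) \<le> psi a + psi b"
  using psi_is_norm unfolding is_norm_Rr_def by blast

lemma psi_abs:
  assumes "a \<in> Rvec r"
  shows "psi (\<lambda>i. \<bar>a i\<bar>) = psi a"
proof -
  have "\<forall>a\<in>Rvec r. psi a = psi (\<lambda>i. \<bar>a i\<bar>)"
    using psi unfolding absolute_normalized_norm_def by blast
  with assms show ?thesis by (metis (no_types))
qed

lemma psi_unit: "j \<in> {1..r} \<Longrightarrow> psi (\<lambda>i. if i = j then 1 else 0) = 1"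
  using psi unfolding absolute_normalized_norm_def by blast

text \<open>\<open>x(j := s)\<close> is the convex combination of \<open>x\<close> and \<open>x(j := - x j)\<close> with weight
  \<open>t = (x j + s) / (2 x j)\<close>, and both have norm \<open>psi x\<close> since the norm is absolute.\<close>
lemma psi_decrease_coordinate:
  assumes x: "x \<in> Rvec r" and nonneg: "\<forall>i. 0 \<le> x i" and s: "0 \<le> s" "s \<le> x j"
  shows "psi (x(j := s)) \<le> psi x"
proof (cases "x j = 0")
  case True
  with s have "x(j := s) = x" by auto
  then show ?thesis by simp
next
  case False
  then have xj: "0 < x j" using nonneg by (metis less_eq_real_def)
  define x' where "x' = x(j := - x j)"
  define t where "t = (x j + s) / (2 * x j)"
  have "j \<in> {1..r}" using x False by (auto simp: Rvec_def)
  then have x': "x' \<in> Rvec r" using x by (auto simp: Rvec_def x'_def)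
  have "(\<lambda>i. \<bar>x' i\<bar>) = x" using nonneg by (auto simp: x'_def)
  then have "psi x' = psi x" using psi_abs[OF x'] by simp
  have t: "0 \<le> t" "t \<le> 1" using xj s by (simp_all add: t_def field_simps)
  have "x(j := s) = (\<lambda>i. t * x i + (1 - t) * x' i)"
  proof
    fix i
    show "(x(j := s)) i = t * x i + (1 - t) * x' i"
    proof (cases "i = j")
      case True
      have "t * x j - (1 - t) * x j = s" using xj by (simp add: t_def field_simps)
      then show ?thesis using True by (simp add: x'_def)
    next
      case False
      then show ?thesis by (simp add: x'_def algebra_simps)
    qed
  qed
  moreover have "(\<lambda>i. t * x i) \<in> Rvec r" "(\<lambda>i. (1 - t) * x' i) \<in> Rvec r"
    using x x' by (auto simp: Rvec_def)
  ultimately have "psi (x(j := s)) \<le> psi (\<lambda>i. t * x i) + psi (\<lambda>i. (1 - t) * x' i)"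
    using psi_triangle by simp
  also have "\<dots> = t * psi x + (1 - t) * psi x'"
    using psi_scale[OF x] psi_scale[OF x'] t by simp
  also have "\<dots> = psi x" using \<open>psi x' = psi x\<close> by (simp add: algebra_simps)
  finally show ?thesis .
qed

lemma psi_mono:
  assumes a: "a \<in> Rvec r" and b: "b \<in> Rvec r" and le: "\<And>i. 0 \<le> a i \<and> a i \<le> b i"
  shows "psi a \<le> psi b"
proof -
  define c where "c m = (\<lambda>i. if i < m then a i else b i)" for m
  have c: "c m \<in> Rvec r" for m using a b by (auto simp: Rvec_def c_def)
  have "psi (c m) \<le> psi b" for m
  proof (induction m)
    case 0 then show ?case by (simp add: c_def)
  next
    case (Suc m)
    have "c (Suc m) = (c m)(m := a m)" by (auto simp: c_def)
    moreover have "psi ((c m)(m := a m)) \<le> psi (c m)"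
      using le by (intro psi_decrease_coordinate[OF c]) (auto simp: c_def intro: order_trans)
    ultimately show ?case using Suc by (metis order_trans)
  qed
  moreover have "c (Suc r) = a" using a b by (auto simp: c_def Rvec_def)
  ultimately show ?thesis by metis
qed

lemma coordinate_le_psi:
  assumes a: "a \<in> Rvec r" and j: "j \<in> {1..r}"
  shows "\<bar>a j\<bar> \<le> psi a"
proof -
  define e where "e = (\<lambda>i. if i = j then 1 else (0::real))"
  have e: "e \<in> Rvec r" using j by (auto simp: Rvec_def e_def)
  have "\<bar>a j\<bar> = psi (\<lambda>i. \<bar>a j\<bar> * e i)"
    using psi_scale[OF e] psi_unit[OF j] by (simp add: e_def)
  also have "\<dots> \<le> psi (\<lambda>i. \<bar>a i\<bar>)"
    using e a by (intro psi_mono) (auto simp: Rvec_def e_def)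
  also have "\<dots> = psi a" using psi_abs[OF a] .
  finally show ?thesis .
qed

lemma norm_diff_in_Rvec:
  "u \<in> psum_space r X \<Longrightarrow> v \<in> psum_space r X \<Longrightarrow> (\<lambda>i. norm (u i - v i)) \<in> Rvec r"
  by (auto simp: Rvec_def psum_space_def)

lemma psum_dist_nonneg:
  "u \<in> psum_space r X \<Longrightarrow> v \<in> psum_space r X \<Longrightarrow> 0 \<le> psum_dist psi u v"
  unfolding psum_dist_def psum_norm_def by (intro psi_nonneg norm_diff_in_Rvec)

lemma psum_dist_self: "psum_dist psi u u = 0"
  by (simp add: psum_dist_def psum_norm_def psi_zero)

lemma psum_dist_coordinate_le:
  "u \<in> psum_space r X \<Longrightarrow> v \<in> psum_space r X \<Longrightarrow> j \<in> {1..r}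
    \<Longrightarrow> norm (u j - v j) \<le> psum_dist psi u v"
  using coordinate_le_psi[OF norm_diff_in_Rvec] by (fastforce simp: psum_dist_def psum_norm_def)

lemma psum_dist_triangle:
  assumes u: "u \<in> psum_space r X" and v: "v \<in> psum_space r X" and z: "z \<in> psum_space r X"
  shows "psum_dist psi u z \<le> psum_dist psi u v + psum_dist psi v z"
proof -
  have "psi (\<lambda>i. norm (u i - z i)) \<le> psi (\<lambda>i. norm (u i - v i) + norm (v i - z i))"
    using u v z by (intro psi_mono norm_diff_in_Rvec)
      (auto simp: Rvec_def psum_space_def intro: norm_diff_triangle_le)
  also have "\<dots> \<le> psi (\<lambda>i. norm (u i - v i)) + psi (\<lambda>i. norm (v i - z i))"
    using psi_triangle norm_diff_in_Rvec u v z by blast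
  finally show ?thesis by (simp add: psum_dist_def psum_norm_def)
qed

lemma psum_dist_convex_combination:
  assumes x: "x \<in> psum_space r X" and y: "y \<in> psum_space r X" and c: "c \<in> psum_space r X"
    and t: "0 \<le> t" "t \<le> 1"
  shows "psum_dist psi (\<lambda>i. (1 - t) *\<^sub>R x i + t *\<^sub>R y i) c
    \<le> (1 - t) * psum_dist psi x c + t * psum_dist psi y c"
proof -
  let ?a = "\<lambda>i. (1 - t) * norm (x i - c i)" and ?b = "\<lambda>i. t * norm (y i - c i)"
  have ab: "?a \<in> Rvec r" "?b \<in> Rvec r" using x y c by (auto simp: Rvec_def psum_space_def)
  have "norm ((1 - t) *\<^sub>R x i + t *\<^sub>R y i - c i) \<le> ?a i + ?b i" for i
  proof -
    have "(1 - t) *\<^sub>R x i + t *\<^sub>R y i - c i = (1 - t) *\<^sub>R (x i - c i) + t *\<^sub>R (y i - c i)"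
      by (simp add: algebra_simps)
    then show ?thesis using t by (metis abs_of_nonneg diff_ge_0_iff_ge norm_scaleR norm_triangle_ineq)
  qed
  then have "psi (\<lambda>i. norm ((1 - t) *\<^sub>R x i + t *\<^sub>R y i - c i)) \<le> psi (\<lambda>i. ?a i + ?b i)"
    using x y c ab by (intro psi_mono) (auto simp: Rvec_def psum_space_def)
  also have "\<dots> \<le> psi ?a + psi ?b" using psi_triangle ab by blast
  also have "\<dots> = (1 - t) * psi (\<lambda>i. norm (x i - c i)) + t * psi (\<lambda>i. norm (y i - c i))"
    using psi_scale[OF norm_diff_in_Rvec[OF x c]] psi_scale[OF norm_diff_in_Rvec[OF y c]] t by simp
  finally show ?thesis by (simp add: psum_dist_def psum_norm_def)
qed

lemma psum_convex_ball:
  assumes KS: "K \<subseteq> psum_space r X" and K: "psum_convex K" and c: "c \<in> K"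
  shows "psum_convex {u \<in> K. psum_dist psi u c \<le> \<rho>}"
  unfolding psum_convex_def
proof (intro ballI allI impI)
  fix x y and t :: real
  assume "x \<in> {u \<in> K. psum_dist psi u c \<le> \<rho>}" "y \<in> {u \<in> K. psum_dist psi u c \<le> \<rho>}"
    and t: "0 \<le> t \<and> t \<le> 1"
  then have x: "x \<in> K" "psum_dist psi x c \<le> \<rho>" and y: "y \<in> K" "psum_dist psi y c \<le> \<rho>"
    by simp_all
  have "psum_dist psi (\<lambda>i. (1 - t) *\<^sub>R x i + t *\<^sub>R y i) c
      \<le> (1 - t) * psum_dist psi x c + t * psum_dist psi y c"
    using x y c KS t by (intro psum_dist_convex_combination) blast+
  also have "\<dots> \<le> (1 - t) * \<rho> + t * \<rho>"
    using x y t by (intro add_mono mult_left_mono) simp_all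
  also have "\<dots> = \<rho>" by (simp add: algebra_simps)
  finally have "psum_dist psi (\<lambda>i. (1 - t) *\<^sub>R x i + t *\<^sub>R y i) c \<le> \<rho>" .
  moreover have "(\<lambda>i. (1 - t) *\<^sub>R x i + t *\<^sub>R y i) \<in> K"
    using K x y t unfolding psum_convex_def by blast
  ultimately show "(\<lambda>i. (1 - t) *\<^sub>R x i + t *\<^sub>R y i) \<in> {u \<in> K. psum_dist psi u c \<le> \<rho>}"
    by simp
qed

lemma nonexpansive_dist_image:
  assumes KS: "K \<subseteq> psum_space r X" and TK: "T ` K \<subseteq> K"
    and T: "psum_nonexpansive psi K T" and v: "v \<in> K" and c: "c \<in> K"
  shows "psum_dist psi (T v) c \<le> psum_dist psi v c + psum_dist psi (T c) c"
proof -
  have "psum_dist psi (T v) c \<le> psum_dist psi (T v) (T c) + psum_dist psi (T c) c"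
    using KS TK v c by (intro psum_dist_triangle) auto
  also have "psum_dist psi (T v) (T c) \<le> psum_dist psi v c"
    using T v c by (simp add: psum_nonexpansive_def)
  finally show ?thesis by simp
qed

lemma psum_conv_minimal: "A \<subseteq> C \<Longrightarrow> psum_convex C \<Longrightarrow> psum_conv A \<subseteq> C"
  unfolding psum_conv_def by blast

lemma iterated_hull_dist_bound:
  assumes KS: "K \<subseteq> psum_space r X" and K: "psum_convex K" and TK: "T ` K \<subseteq> K"
    and T: "psum_nonexpansive psi K T" and c: "c \<in> K" and D1: "D 1 = {c}"
    and Dstep: "\<forall>j. 1 \<le> j \<and> j \<le> k - 1 \<longrightarrow> D (j + 1) = psum_conv (D j \<union> T ` D j)"
    and j: "1 \<le> j" "j \<le> k"
  shows "D j \<subseteq> {u \<in> K. psum_dist psi u c \<le> (real j - 1) * psum_dist psi (T c) c}"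
  using j
proof (induction j rule: dec_induct)
  case base
  then show ?case using D1 c by (simp add: psum_dist_self)
next
  case (step j)
  let ?\<delta> = "psum_dist psi (T c) c"
  have "0 \<le> ?\<delta>" using KS TK c by (intro psum_dist_nonneg) auto
  have IH: "D j \<subseteq> {u \<in> K. psum_dist psi u c \<le> (real j - 1) * ?\<delta>}"
    using step by simp
  have "D j \<union> T ` D j \<subseteq> {u \<in> K. psum_dist psi u c \<le> real j * ?\<delta>}"
  proof
    fix u assume "u \<in> D j \<union> T ` D j"
    then show "u \<in> {u \<in> K. psum_dist psi u c \<le> real j * ?\<delta>}"
    proof
      assume "u \<in> D j"
      with IH have "u \<in> K" "psum_dist psi u c \<le> (real j - 1) * ?\<delta>" by auto
      with \<open>0 \<le> ?\<delta>\<close> show ?thesis by (simp add: algebra_simps)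
    next
      assume "u \<in> T ` D j"
      then obtain v where v: "v \<in> D j" "u = T v" by blast
      with IH have "v \<in> K" "psum_dist psi v c \<le> (real j - 1) * ?\<delta>" by auto
      moreover from this(1) have "psum_dist psi (T v) c \<le> psum_dist psi v c + ?\<delta>"
        by (rule nonexpansive_dist_image[OF KS TK T _ c])
      ultimately show ?thesis using v TK by (auto simp: algebra_simps)
    qed
  qed
  moreover have "D (Suc j) = psum_conv (D j \<union> T ` D j)"
    using Dstep step by simp
  ultimately show ?case
    using psum_conv_minimal[OF _ psum_convex_ball[OF KS K c]] by simp
qed

end

theorem lemma3p1:
  fixes r :: nat
    and X :: "nat \<Rightarrow> 'a::banach set"
    and psi :: "(nat \<Rightarrow> real) \<Rightarrow> real"
    and K :: "(nat \<Rightarrow> 'a) set"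
    and T :: "(nat \<Rightarrow> 'a) \<Rightarrow> (nat \<Rightarrow> 'a)"
    and w :: "nat \<Rightarrow> (nat \<Rightarrow> 'a)"
    and \<epsilon>1 :: real and k :: nat and n1 :: nat
    and D :: "nat \<Rightarrow> (nat \<Rightarrow> 'a) set"
  assumes r: "r \<ge> 1"
    and X: "\<forall>i\<in>{1..r}. subspace (X i) \<and> closed (X i)"
    and psi: "absolute_normalized_norm r psi"
    and KS: "K \<subseteq> psum_space r X"
    and Kwc: "psum_weakly_compact r X psi K"
    and Kconv: "psum_convex K"
    and TK: "T ` K \<subseteq> K"
    and Tne: "psum_nonexpansive psi K T"
    and Kmin: "minimal_invariant r X psi T K"
    and diam: "psum_diam psi K = 1"
    and wK: "\<forall>n. w n \<in> K"
    and afps: "(\<lambda>n. psum_dist psi (T (w n)) (w n)) \<longlonglongrightarrow> 0"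
    and zero: "(\<lambda>i. 0) \<in> K"
    and weak: "limitin (psum_weak_topology r X psi) w (\<lambda>i. 0) sequentially"
    and lastc: "(\<lambda>n. norm (w n r)) \<longlonglongrightarrow> 0"
    and eps: "0 < \<epsilon>1" "\<epsilon>1 < 1"
    and k: "k \<ge> 1"
    and n1: "psum_dist psi (T (w n1)) (w n1) < \<epsilon>1" "norm (w n1 r) < \<epsilon>1"
    and D1: "D 1 = {w n1}"
    and Dstep: "\<forall>j. 1 \<le> j \<and> j \<le> k - 1 \<longrightarrow> D (j + 1) = psum_conv (D j \<union> T ` D j)"
  shows "\<forall>u\<in>D k. norm (u r) < real k * \<epsilon>1"
proof
  fix u assume "u \<in> D k"
  with iterated_hull_dist_bound[OF psi KS Kconv TK Tne wK[rule_format] D1 Dstep k order_refl]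
  have u: "u \<in> K" and dist_u: "psum_dist psi u (w n1) \<le> (real k - 1) * psum_dist psi (T (w n1)) (w n1)"
    by auto
  have "norm (u r) \<le> norm (w n1 r) + norm (u r - w n1 r)"
    by (metis add.commute diff_add_cancel norm_triangle_ineq)
  also have "norm (u r - w n1 r) \<le> psum_dist psi u (w n1)"
    using u wK KS r by (intro psum_dist_coordinate_le[OF psi]) auto
  also have "\<dots> \<le> (real k - 1) * \<epsilon>1"
    using n1(1) k by (intro order_trans[OF dist_u] mult_left_mono) auto
  finally show "norm (u r) < real k * \<epsilon>1"
    using n1(2) by (simp add: algebra_simps)
qed

end
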